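(* Let $\mathcal{A}$ be a finite abelian group with $|\mathcal{A}|\ge 3$. Let $M_9(p_1,p_2)$ be the graph consisting of two triangles $v_1v_3v_4$ and $v_1v_5v_6$ sharing the vertex $v_1$, a vertex $v_2$ adjacent to $v_1$, $p_1\ge 0$ pendant vertices adjacent to $v_1$, and $p_2\ge 1$ pendant vertices adjacent to $v_2$. Then $M_9(p_1,p_2)$ is $\mathcal{A}$-vertex magic if and only if $p_1=0$ and there exist distinct elements $g,h\in\mathcal{A}\setminus\{0\}$ with $4(g-h)=0$.
   Context: A map $\ell:V(G)\to\mathcal{A}\setminus\{0\}$ is an $\mathcal{A}$-vertex magic labeling if there is $\mu\in\mathcal{A}$ with $\sum_{u\in N(v)}\ell(u)=\mu$ for every vertex $v$; $G$ is $\mathcal{A}$-vertex magic if such a labeling exists. A pendant vertex has degree $1$. *)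

theory Defs
  imports Main
begin

definition vertex_magic_labeling ::
  "'v set \<Rightarrow> ('v \<Rightarrow> 'v \<Rightarrow> bool) \<Rightarrow> ('v \<Rightarrow> 'a::ab_group_add) \<Rightarrow> bool" where
  "vertex_magic_labeling Vs adj l \<longleftrightarrow>
     (\<forall>v\<in>Vs. l v \<noteq> 0) \<and>
     (\<exists>\<mu>. \<forall>v\<in>Vs. (\<Sum>u\<in>{u\<in>Vs. adj v u}. l u) = \<mu>)"

definition is_vertex_magic ::
  "'a::ab_group_add itself \<Rightarrow> 'v set \<Rightarrow> ('v \<Rightarrow> 'v \<Rightarrow> bool) \<Rightarrow> bool" where
  "is_vertex_magic _ Vs adj \<longleftrightarrow> (\<exists>l::'v \<Rightarrow> 'a. vertex_magic_labeling Vs adj l)"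

text \<open>Vertices of M_9(p1,p2): V i (i = 1..6) are v_1..v_6, P1 i (i < p1) are the
pendants at v_1, P2 i (i < p2) are the pendants at v_2.\<close>

datatype m9v = V nat | P1 nat | P2 nat

definition m9_verts :: "nat \<Rightarrow> nat \<Rightarrow> m9v set" where
  "m9_verts p1 p2 = V ` {1..6} \<union> P1 ` {..<p1} \<union> P2 ` {..<p2}"

definition m9_edges :: "nat \<Rightarrow> nat \<Rightarrow> (m9v \<times> m9v) set" where
  "m9_edges p1 p2 =
     {(V 1, V 3), (V 1, V 4), (V 3, V 4), (V 1, V 5), (V 1, V 6), (V 5, V 6), (V 1, V 2)}
     \<union> (\<lambda>i. (V 1, P1 i)) ` {..<p1} \<union> (\<lambda>i. (V 2, P2 i)) ` {..<p2}"

definition m9_adj :: "nat \<Rightarrow> nat \<Rightarrow> m9v \<Rightarrow> m9v \<Rightarrow> bool" where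
  "m9_adj p1 p2 u v \<longleftrightarrow> (u, v) \<in> m9_edges p1 p2 \<or> (v, u) \<in> m9_edges p1 p2"

end

theory Submission
  imports Defs
begin

text \<open>
  The pendants at \<open>v\<^sub>2\<close> force \<open>\<ell>(v\<^sub>2) = \<mu>\<close>, and each triangle vertex
  sees \<open>v\<^sub>1\<close> and its partner, so \<open>v\<^sub>3, \<dots>, v\<^sub>6\<close> all carry \<open>\<mu> - \<ell>(v\<^sub>1)\<close>.
  A pendant at \<open>v\<^sub>1\<close> would force \<open>\<ell>(v\<^sub>1) = \<mu>\<close> and hence the label \<open>0\<close> on \<open>v\<^sub>3\<close>;
  so \<open>p\<^sub>1 = 0\<close>, and the condition at \<open>v\<^sub>1\<close> becomes \<open>4(\<mu> - \<ell>(v\<^sub>1)) = 0\<close>.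
  Conversely, given such \<open>g, h\<close>, label \<open>v\<^sub>1\<close> by \<open>h\<close>, \<open>v\<^sub>2\<close> by \<open>g\<close>,
  the triangle vertices by \<open>g - h\<close>, and split \<open>g - h\<close> into \<open>p\<^sub>2\<close> nonzero summands
  on the pendants at \<open>v\<^sub>2\<close>; such a splitting exists as soon as \<open>|\<A>| \<ge> 3\<close>.
\<close>

lemma ex_distinct_from_two:
  assumes "card (UNIV :: 'a::finite set) \<ge> 3"
  shows "\<exists>x::'a. x \<noteq> a \<and> x \<noteq> b"
proof (rule ccontr)
  assume "\<not> ?thesis"
  then have "UNIV = {a, b}" by auto
  then have "card (UNIV :: 'a set) = card {a, b}" by (rule arg_cong)
  also have "\<dots> \<le> 2" by (simp add: card_insert_if)
  finally show False using assms by simp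
qed

lemma ex_nonzero_summands:
  fixes s :: "'a::{finite, ab_group_add}" and n :: nat
  assumes "card (UNIV :: 'a set) \<ge> 3" and "n \<ge> 1" and "s \<noteq> 0"
  shows "\<exists>f. (\<forall>i<n. f i \<noteq> 0) \<and> (\<Sum>i<n. f i) = s"
  using assms(2,3)
proof (induction n arbitrary: s rule: nat_induct_at_least)
  case base
  then show ?case by (intro exI[of _ "\<lambda>_. s"]) simp
next
  case (Suc n)
  obtain x where x: "x \<noteq> 0" "x \<noteq> s" using ex_distinct_from_two[OF assms(1)] by blast
  then obtain f where f: "\<forall>i<n. f i \<noteq> 0" "(\<Sum>i<n. f i) = s - x"
    using Suc.IH[of "s - x"] x by auto
  show ?case
    using f x by (intro exI[of _ "f(n := x)"]) (auto simp: less_Suc_eq)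
qed

definition nbhd_sum :: "'v set \<Rightarrow> ('v \<Rightarrow> 'v \<Rightarrow> bool) \<Rightarrow> ('v \<Rightarrow> 'a::comm_monoid_add) \<Rightarrow> 'v \<Rightarrow> 'a" where
  "nbhd_sum Vs adj l v = (\<Sum>u\<in>{u\<in>Vs. adj v u}. l u)"

lemma vertex_magic_labeling_iff:
  "vertex_magic_labeling Vs adj l \<longleftrightarrow>
     (\<forall>v\<in>Vs. l v \<noteq> 0) \<and> (\<exists>\<mu>. \<forall>v\<in>Vs. nbhd_sum Vs adj l v = \<mu>)"
  by (simp add: vertex_magic_labeling_def nbhd_sum_def)

lemma m9_verts_iff:
  "v \<in> m9_verts p1 p2 \<longleftrightarrow>
     v \<in> {V 1, V 2, V 3, V 4, V 5, V 6} \<or> (\<exists>i<p1. v = P1 i) \<or> (\<exists>i<p2. v = P2 i)"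
  by (auto simp: m9_verts_def)

lemma m9_nbhd:
  "{u \<in> m9_verts p1 p2. m9_adj p1 p2 (V 1) u} = {V 2, V 3, V 4, V 5, V 6} \<union> P1 ` {..<p1}"
  "{u \<in> m9_verts p1 p2. m9_adj p1 p2 (V 2) u} = insert (V 1) (P2 ` {..<p2})"
  "{u \<in> m9_verts p1 p2. m9_adj p1 p2 (V 3) u} = {V 1, V 4}"
  "{u \<in> m9_verts p1 p2. m9_adj p1 p2 (V 4) u} = {V 1, V 3}"
  "{u \<in> m9_verts p1 p2. m9_adj p1 p2 (V 5) u} = {V 1, V 6}"
  "{u \<in> m9_verts p1 p2. m9_adj p1 p2 (V 6) u} = {V 1, V 5}"
  "i < p1 \<Longrightarrow> {u \<in> m9_verts p1 p2. m9_adj p1 p2 (P1 i) u} = {V 1}"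
  "i < p2 \<Longrightarrow> {u \<in> m9_verts p1 p2. m9_adj p1 p2 (P2 i) u} = {V 2}"
  by (auto simp: m9_verts_def m9_adj_def m9_edges_def)

lemma m9_nbhd_sum:
  fixes l :: "m9v \<Rightarrow> 'a::comm_monoid_add"
  shows "nbhd_sum (m9_verts p1 p2) (m9_adj p1 p2) l (V 1)
           = l (V 2) + l (V 3) + l (V 4) + l (V 5) + l (V 6) + (\<Sum>i<p1. l (P1 i))"
    and "nbhd_sum (m9_verts p1 p2) (m9_adj p1 p2) l (V 2) = l (V 1) + (\<Sum>i<p2. l (P2 i))"
    and "nbhd_sum (m9_verts p1 p2) (m9_adj p1 p2) l (V 3) = l (V 1) + l (V 4)"
    and "nbhd_sum (m9_verts p1 p2) (m9_adj p1 p2) l (V 4) = l (V 1) + l (V 3)"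
    and "nbhd_sum (m9_verts p1 p2) (m9_adj p1 p2) l (V 5) = l (V 1) + l (V 6)"
    and "nbhd_sum (m9_verts p1 p2) (m9_adj p1 p2) l (V 6) = l (V 1) + l (V 5)"
    and "i < p1 \<Longrightarrow> nbhd_sum (m9_verts p1 p2) (m9_adj p1 p2) l (P1 i) = l (V 1)"
    and "i < p2 \<Longrightarrow> nbhd_sum (m9_verts p1 p2) (m9_adj p1 p2) l (P2 i) = l (V 2)"
  by (simp_all add: nbhd_sum_def m9_nbhd image_iff sum.reindex inj_on_def add.assoc del: One_nat_def)

lemma m9_constant_nbhd_sum_iff:
  fixes l :: "m9v \<Rightarrow> 'a::comm_monoid_add"
  shows "(\<forall>v\<in>m9_verts p1 p2. nbhd_sum (m9_verts p1 p2) (m9_adj p1 p2) l v = \<mu>) \<longleftrightarrow>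
    l (V 2) + l (V 3) + l (V 4) + l (V 5) + l (V 6) + (\<Sum>i<p1. l (P1 i)) = \<mu> \<and>
    l (V 1) + (\<Sum>i<p2. l (P2 i)) = \<mu> \<and>
    l (V 1) + l (V 3) = \<mu> \<and> l (V 1) + l (V 4) = \<mu> \<and>
    l (V 1) + l (V 5) = \<mu> \<and> l (V 1) + l (V 6) = \<mu> \<and>
    (p1 \<noteq> 0 \<longrightarrow> l (V 1) = \<mu>) \<and> (p2 \<noteq> 0 \<longrightarrow> l (V 2) = \<mu>)"
  (is "?constant \<longleftrightarrow> ?equations")
proof
  assume ?constant
  then have "nbhd_sum (m9_verts p1 p2) (m9_adj p1 p2) l v = \<mu>" if "v \<in> m9_verts p1 p2" for v
    using that by blast
  from this[of "V 1"] this[of "V 2"] this[of "V 3"] this[of "V 4"] this[of "V 5"] this[of "V 6"]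
    this[of "P1 0"] this[of "P2 0"]
  show ?equations by (auto simp: m9_verts_iff m9_nbhd_sum add.commute simp del: One_nat_def)
next
  assume ?equations
  then show ?constant by (auto simp: m9_verts_iff m9_nbhd_sum add.commute simp del: One_nat_def)
qed

lemma m9_magic_labeling_necessary:
  fixes l :: "m9v \<Rightarrow> 'a::ab_group_add"
  assumes "vertex_magic_labeling (m9_verts p1 p2) (m9_adj p1 p2) l" and "p2 \<ge> 1"
  shows "p1 = 0 \<and> (\<exists>g h :: 'a. g \<noteq> 0 \<and> h \<noteq> 0 \<and> g \<noteq> h \<and>
             (g - h) + (g - h) + (g - h) + (g - h) = 0)"
proof -
  obtain \<mu> where nonzero: "\<forall>v\<in>m9_verts p1 p2. l v \<noteq> 0"
    and "\<forall>v\<in>m9_verts p1 p2. nbhd_sum (m9_verts p1 p2) (m9_adj p1 p2) l v = \<mu>"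
    using assms(1) by (auto simp: vertex_magic_labeling_iff)
  then have equations: "l (V 2) + l (V 3) + l (V 4) + l (V 5) + l (V 6) + (\<Sum>i<p1. l (P1 i)) = \<mu>"
      "l (V 1) + l (V 3) = \<mu>" "l (V 1) + l (V 4) = \<mu>" "l (V 1) + l (V 5) = \<mu>" "l (V 1) + l (V 6) = \<mu>"
      "p1 \<noteq> 0 \<Longrightarrow> l (V 1) = \<mu>" "p2 \<noteq> 0 \<Longrightarrow> l (V 2) = \<mu>"
    by (simp_all add: m9_constant_nbhd_sum_iff)
  have V2: "l (V 2) = \<mu>" using equations(7) assms(2) by simp
  have triangles: "l (V 3) = \<mu> - l (V 1)" "l (V 4) = \<mu> - l (V 1)"
      "l (V 5) = \<mu> - l (V 1)" "l (V 6) = \<mu> - l (V 1)"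
    using equations(2-5) by (auto simp: algebra_simps)
  have "l (V 1) \<noteq> 0" "l (V 3) \<noteq> 0" "l (V 2) \<noteq> 0" using nonzero by (simp_all add: m9_verts_iff)
  then have "l (V 1) \<noteq> \<mu>" "\<mu> \<noteq> 0" using triangles(1) V2 by auto
  then have "p1 = 0" using equations(6) by blast
  then have "(\<mu> - l (V 1)) + (\<mu> - l (V 1)) + (\<mu> - l (V 1)) + (\<mu> - l (V 1)) = 0"
    using equations(1) V2 triangles by (simp add: algebra_simps)
  with \<open>p1 = 0\<close> \<open>l (V 1) \<noteq> 0\<close> \<open>l (V 1) \<noteq> \<mu>\<close> \<open>\<mu> \<noteq> 0\<close> show ?thesis by blast
qed

lemma m9_magic_labeling_sufficient:
  fixes g h :: "'a::{finite, ab_group_add}"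
  assumes "card (UNIV :: 'a set) \<ge> 3" and "p2 \<ge> 1"
    and "g \<noteq> 0" and "h \<noteq> 0" and "g \<noteq> h" and "(g - h) + (g - h) + (g - h) + (g - h) = 0"
  shows "is_vertex_magic TYPE('a) (m9_verts 0 p2) (m9_adj 0 p2)"
proof -
  obtain f where f: "\<forall>i<p2. f i \<noteq> 0" "(\<Sum>i<p2. f i) = g - h"
    using ex_nonzero_summands[OF assms(1,2), of "g - h"] assms(5) by auto
  define l where "l v = (case v of
      V n \<Rightarrow> if n = 1 then h else if n = 2 then g else g - h
    | P1 _ \<Rightarrow> undefined
    | P2 i \<Rightarrow> f i)" for v
  have "\<forall>v\<in>m9_verts 0 p2. l v \<noteq> 0"
    using assms(3-5) f by (auto simp: m9_verts_iff l_def)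
  moreover have "\<forall>v\<in>m9_verts 0 p2. nbhd_sum (m9_verts 0 p2) (m9_adj 0 p2) l v = g"
    unfolding m9_constant_nbhd_sum_iff using assms(6) f by (simp add: l_def algebra_simps)
  ultimately show ?thesis
    by (auto simp: is_vertex_magic_def vertex_magic_labeling_iff)
qed

theorem proposition4p8:
  fixes p1 p2 :: nat
  assumes "card (UNIV :: ('a::{finite, ab_group_add}) set) \<ge> 3"
    and "p2 \<ge> 1"
  shows "is_vertex_magic TYPE('a) (m9_verts p1 p2) (m9_adj p1 p2) \<longleftrightarrow>
         (p1 = 0 \<and> (\<exists>g h :: 'a. g \<noteq> 0 \<and> h \<noteq> 0 \<and> g \<noteq> h \<and>
             (g - h) + (g - h) + (g - h) + (g - h) = 0))"
  using m9_magic_labeling_necessary[OF _ assms(2)] m9_magic_labeling_sufficient[OF assms]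
  by (auto simp: is_vertex_magic_def)

end
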